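(* Let $F=\breve F(\alpha_1,\dots,\alpha_t)$ be a fence with shared elements $s_1,\dots,s_{t-1}$. Then $Y=\{\hat\chi_{s_i}: i\in[t-1]\}$ is linearly independent and $\operatorname{Span}_{\mathbb R}(Y)\cap I_T(F)=\{0\}$.
   Context: Fences: let $\alpha=(\alpha_1,\dots,\alpha_t)$ be positive integers with $t\ge2$ and $\alpha_1,\alpha_t\ge2$. Put $a_0=0$, $a_i=\alpha_1+\dots+\alpha_i$, $n=a_t-1$. The fence $\breve F(\alpha)$ is the poset on $\{x_1,\dots,x_n\}$ whose cover relations are: for $1\le j\le n-1$ with $a_{i-1}\le j<a_i$, $x_j\lessdot x_{j+1}$ if $i$ is odd and $x_j\gtrdot x_{j+1}$ if $i$ is even. Shared elements are $s_i=x_{a_i}$, $i\in[t-1]$. $\mathcal J(F)$ is the set of order ideals. For $q\in F$, $I\in\mathcal J(F)$: $\hat\chi_q(I)=1$ if $q\in I$, else $0$; $T_q(I)=1$ if $q\in\min(F\setminus I)$, $-1$ if $q\in\max(I)$, $0$ otherwise. $f\equiv\text{const}$ means $f=c+\sum_{q\in F}c_qT_q$ for real constants $c,c_q$. The order ideal toggleability space is $I_T(F)=\{f\in\operatorname{Span}_{\mathbb R}\{\hat\chi_q:q\in F\}: f\equiv\text{const}\}$. *)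

theory Defs
  imports Complex_Main
begin

text \<open>A composition alpha = (alpha_1,...,alpha_t) is a list of naturals; alpha_i = alpha ! (i-1).
  Elements x_1,...,x_n of the fence are represented by the naturals 1..n.\<close>

definition fence_a :: "nat list \<Rightarrow> nat \<Rightarrow> nat" where
  "fence_a \<alpha> i = sum_list (take i \<alpha>)"

definition fence_n :: "nat list \<Rightarrow> nat" where
  "fence_n \<alpha> = fence_a \<alpha> (length \<alpha>) - 1"

definition fence_elems :: "nat list \<Rightarrow> nat set" where
  "fence_elems \<alpha> = {1..fence_n \<alpha>}"

text \<open>Cover relation: (p,q) means x_p is covered by x_q.\<close>
definition fence_cover :: "nat list \<Rightarrow> (nat \<times> nat) set" where
  "fence_cover \<alpha> = {(p, q). \<exists>j i. 1 \<le> j \<and> j \<le> fence_n \<alpha> - 1 \<and> 1 \<le> i \<and> i \<le> length \<alpha>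
      \<and> fence_a \<alpha> (i - 1) \<le> j \<and> j < fence_a \<alpha> i
      \<and> ((odd i \<and> p = j \<and> q = j + 1) \<or> (even i \<and> p = j + 1 \<and> q = j))}"

definition fence_le :: "nat list \<Rightarrow> nat \<Rightarrow> nat \<Rightarrow> bool" where
  "fence_le \<alpha> p q \<longleftrightarrow> p \<in> fence_elems \<alpha> \<and> q \<in> fence_elems \<alpha> \<and> (p, q) \<in> (fence_cover \<alpha>)\<^sup>*"

definition fence_less :: "nat list \<Rightarrow> nat \<Rightarrow> nat \<Rightarrow> bool" where
  "fence_less \<alpha> p q \<longleftrightarrow> fence_le \<alpha> p q \<and> p \<noteq> q"

definition fence_shared :: "nat list \<Rightarrow> nat \<Rightarrow> nat" where
  "fence_shared \<alpha> i = fence_a \<alpha> i"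

definition fence_ideals :: "nat list \<Rightarrow> nat set set" where
  "fence_ideals \<alpha> = {I. I \<subseteq> fence_elems \<alpha> \<and> (\<forall>q\<in>I. \<forall>p. fence_le \<alpha> p q \<longrightarrow> p \<in> I)}"

definition chi_hat :: "nat \<Rightarrow> nat set \<Rightarrow> real" where
  "chi_hat q I = (if q \<in> I then 1 else 0)"

definition toggle_T :: "nat list \<Rightarrow> nat \<Rightarrow> nat set \<Rightarrow> real" where
  "toggle_T \<alpha> q I =
     (if q \<in> fence_elems \<alpha> - I \<and> (\<forall>p\<in>fence_elems \<alpha> - I. \<not> fence_less \<alpha> p q) then 1
      else if q \<in> I \<and> (\<forall>p\<in>I. \<not> fence_less \<alpha> q p) then -1
      else 0)"

text \<open>Functions on J(F) are represented as functions nat set => real, only their values on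
  J(F) matter. f \<equiv> const.\<close>
definition toggle_const :: "nat list \<Rightarrow> (nat set \<Rightarrow> real) \<Rightarrow> bool" where
  "toggle_const \<alpha> f \<longleftrightarrow> (\<exists>c cq. \<forall>I\<in>fence_ideals \<alpha>.
      f I = c + (\<Sum>q\<in>fence_elems \<alpha>. cq q * toggle_T \<alpha> q I))"

definition in_chi_span :: "nat list \<Rightarrow> (nat set \<Rightarrow> real) \<Rightarrow> bool" where
  "in_chi_span \<alpha> f \<longleftrightarrow> (\<exists>cq. \<forall>I\<in>fence_ideals \<alpha>.
      f I = (\<Sum>q\<in>fence_elems \<alpha>. cq q * chi_hat q I))"

definition toggleability_space :: "nat list \<Rightarrow> (nat set \<Rightarrow> real) set" where
  "toggleability_space \<alpha> = {f. in_chi_span \<alpha> f \<and> toggle_const \<alpha> f}"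

end

theory Submission
  imports Defs
begin

(* The shared elements s_i are exactly the turns of the fence, the interior elements at which
   the zigzag changes direction. For every element q there is an ideal I such that I \<union> {q} is an
   ideal too; for q = s_i, passing from I to I \<union> {q} changes only chi_{s_i}, which gives the
   linear independence.

   Now let f = \<Sum> d_i chi_{s_i} = c + \<Sum> c_q T_q on ideals. The chi-side is modular,
   f (X \<union> Y) + f (X \<inter> Y) = f X + f Y, and does not change when a non-turn is added to an ideal,
   so the same holds for G = \<Sum> c_q T_q. At a turn s there are ideals X, Y for which the modularity
   defect of T_q vanishes for all q except s, so c_s = 0. Adding a non-turn p to an ideal changes
   T_p by -2 and T at each non-turn neighbour of p by +1, so q \<mapsto> c_q is discretely harmonic
   away from the turns and the two ends, where it vanishes. By the maximum principle all c_q
   vanish, and c = f {} = 0. *)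

section \<open>A discrete maximum principle\<close>

lemma discrete_max_principle:
  fixes e :: "nat \<Rightarrow> real"
  assumes "e 0 \<le> 0" "e (Suc n) \<le> 0"
    and subharmonic: "\<And>q. q \<in> {1..n} \<Longrightarrow> e q \<le> 0 \<or> 2 * e q \<le> e (q - 1) + e (Suc q)"
    and "q \<le> Suc n"
  shows "e q \<le> 0"
proof (rule ccontr)
  assume "\<not> e q \<le> 0"
  define M where "M = Max (e ` {..Suc n})"
  have le_M: "e k \<le> M" if "k \<le> Suc n" for k
    unfolding M_def using that by simp
  have "M \<in> e ` {..Suc n}"
    unfolding M_def by (intro Max_in) auto
  then have "\<exists>m. m \<le> Suc n \<and> e m = M"
    by auto
  then obtain m where m: "m \<le> Suc n" "e m = M" and least: "\<And>k. k < m \<Longrightarrow> \<not> (k \<le> Suc n \<and> e k = M)"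
    unfolding exists_least_iff[of "\<lambda>m. m \<le> Suc n \<and> e m = M"] by blast
  have "M > 0"
    using le_M[OF \<open>q \<le> Suc n\<close>] \<open>\<not> e q \<le> 0\<close> by simp
  then have "m \<in> {1..n}"
    using m assms(1,2) by (cases m) (auto simp: le_Suc_eq)
  then have "2 * M \<le> e (m - 1) + e (Suc m)"
    using subharmonic m \<open>M > 0\<close> by fastforce
  moreover have "e (m - 1) \<le> M" "e (Suc m) \<le> M"
    using \<open>m \<in> {1..n}\<close> le_M by auto
  ultimately have "e (m - 1) = M"
    by linarith
  then show False
    using least[of "m - 1"] \<open>m \<in> {1..n}\<close> by auto
qed

lemma discrete_harmonic_eq_0:
  fixes e :: "nat \<Rightarrow> real"
  assumes "e 0 = 0" "e (Suc n) = 0"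
    and "\<And>q. q \<in> {1..n} \<Longrightarrow> e q = 0 \<or> 2 * e q = e (q - 1) + e (Suc q)"
    and "q \<le> Suc n"
  shows "e q = 0"
proof -
  have "e k \<le> 0 \<or> 2 * e k \<le> e (k - 1) + e (Suc k)"
    and "- e k \<le> 0 \<or> 2 * - e k \<le> - e (k - 1) + - e (Suc k)" if "k \<in> {1..n}" for k
    using assms(3)[OF that] by auto
  then have "e q \<le> 0" and "- e q \<le> 0"
    using assms(1,2,4) discrete_max_principle[of e n] discrete_max_principle[of "\<lambda>k. - e k" n]
    by simp_all
  then show ?thesis
    by simp
qed

section \<open>Zigzag paths\<close>

(* Any poset on 1, ..., n whose Hasse diagram is the path 1 - 2 - ... - n is determined by
   up j, which says whether j is covered by j + 1 (rather than covering it). For a fence,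
   up = fence_up. *)
definition zigzag_cover :: "(nat \<Rightarrow> bool) \<Rightarrow> nat \<Rightarrow> (nat \<times> nat) set" where
  "zigzag_cover up n = {(p, q). \<exists>j. 1 \<le> j \<and> j < n \<and>
     ((up j \<and> p = j \<and> q = Suc j) \<or> (\<not> up j \<and> p = Suc j \<and> q = j))}"

definition zigzag_ideal :: "(nat \<Rightarrow> bool) \<Rightarrow> nat \<Rightarrow> nat set \<Rightarrow> bool" where
  "zigzag_ideal up n I \<longleftrightarrow>
     I \<subseteq> {1..n} \<and> (\<forall>p q. (p, q) \<in> zigzag_cover up n \<longrightarrow> q \<in> I \<longrightarrow> p \<in> I)"

definition zigzag_toggle :: "(nat \<Rightarrow> bool) \<Rightarrow> nat \<Rightarrow> nat \<Rightarrow> nat set \<Rightarrow> real" where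
  "zigzag_toggle up n q I =
     (if q \<notin> I \<and> (\<forall>p. (p, q) \<in> zigzag_cover up n \<longrightarrow> p \<in> I) then 1
      else if q \<in> I \<and> (\<forall>p. (q, p) \<in> zigzag_cover up n \<longrightarrow> p \<notin> I) then -1
      else 0)"

definition zigzag_turn :: "(nat \<Rightarrow> bool) \<Rightarrow> nat \<Rightarrow> nat \<Rightarrow> bool" where
  "zigzag_turn up n q \<longleftrightarrow> 2 \<le> q \<and> q < n \<and> up (q - 1) \<noteq> up q"

definition zigzag_toggle_defect :: "(nat \<Rightarrow> bool) \<Rightarrow> nat \<Rightarrow> nat \<Rightarrow> nat set \<Rightarrow> nat set \<Rightarrow> real" where
  "zigzag_toggle_defect up n q X Y =
     zigzag_toggle up n q (X \<union> Y) + zigzag_toggle up n q (X \<inter> Y)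
     - zigzag_toggle up n q X - zigzag_toggle up n q Y"

lemma zigzag_cover_iff:
  "(p, q) \<in> zigzag_cover up n \<longleftrightarrow>
     (1 \<le> p \<and> p < n \<and> q = Suc p \<and> up p) \<or> (1 \<le> q \<and> q < n \<and> p = Suc q \<and> \<not> up q)"
  unfolding zigzag_cover_def by auto

lemma zigzag_cover_irrefl: "(p, p) \<notin> zigzag_cover up n"
  unfolding zigzag_cover_iff by simp

lemma zigzag_cover_in_range: "(p, q) \<in> zigzag_cover up n \<Longrightarrow> p \<in> {1..n} \<and> q \<in> {1..n}"
  unfolding zigzag_cover_iff by auto

lemma zigzag_cover_neighbour:
  "p \<in> {1..n} \<Longrightarrow> q \<in> {1..n} \<Longrightarrow> p = q - 1 \<or> p = Suc q \<Longrightarrow>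
    (p, q) \<in> zigzag_cover up n \<or> (q, p) \<in> zigzag_cover up n"
  unfolding zigzag_cover_iff by auto

lemma zigzag_upper_cover_unique:
  "\<not> zigzag_turn up n p \<Longrightarrow> (p, q) \<in> zigzag_cover up n \<Longrightarrow> (p, r) \<in> zigzag_cover up n \<Longrightarrow> r = q"
  unfolding zigzag_cover_iff zigzag_turn_def by auto

lemma zigzag_lower_cover_unique:
  "\<not> zigzag_turn up n p \<Longrightarrow> (q, p) \<in> zigzag_cover up n \<Longrightarrow> (r, p) \<in> zigzag_cover up n \<Longrightarrow> r = q"
  unfolding zigzag_cover_iff zigzag_turn_def by auto

lemma zigzag_turn_in_range: "zigzag_turn up n q \<Longrightarrow> q \<in> {1..n}"
  unfolding zigzag_turn_def by simp

lemma zigzag_ideal_empty: "zigzag_ideal up n {}"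
  unfolding zigzag_ideal_def by simp

lemma zigzag_ideal_Un: "zigzag_ideal up n X \<Longrightarrow> zigzag_ideal up n Y \<Longrightarrow> zigzag_ideal up n (X \<union> Y)"
  unfolding zigzag_ideal_def by blast

lemma zigzag_ideal_Int: "zigzag_ideal up n X \<Longrightarrow> zigzag_ideal up n Y \<Longrightarrow> zigzag_ideal up n (X \<inter> Y)"
  unfolding zigzag_ideal_def by blast

lemma zigzag_ideal_prefix: "k \<le> n \<Longrightarrow> (1 \<le> k \<and> k < n \<longrightarrow> up k) \<Longrightarrow> zigzag_ideal up n {1..k}"
  unfolding zigzag_ideal_def zigzag_cover_iff by (auto simp: Suc_le_eq le_less)

lemma zigzag_ideal_suffix: "(1 \<le> k \<and> k < n \<longrightarrow> \<not> up k) \<Longrightarrow> zigzag_ideal up n {Suc k..n}"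
  unfolding zigzag_ideal_def zigzag_cover_iff by (auto simp: Suc_le_eq le_less)

lemma zigzag_ideal_rtrancl_closed:
  assumes "zigzag_ideal up n I" and "(p, q) \<in> (zigzag_cover up n)\<^sup>*" and "q \<in> I"
  shows "p \<in> I"
  using assms(2,3)
proof (induction rule: converse_rtrancl_induct)
  case (step x y)
  then show ?case
    using assms(1) unfolding zigzag_ideal_def by blast
qed

lemma zigzag_ideal_insert_exists:
  assumes "q \<in> {1..n}"
  obtains X where "zigzag_ideal up n X" "zigzag_ideal up n (insert q X)" "q \<notin> X"
proof -
  consider "(2 \<le> q \<longrightarrow> up (q - 1)) \<and> (q < n \<longrightarrow> up q)"
    | "(2 \<le> q \<longrightarrow> \<not> up (q - 1)) \<and> (q < n \<longrightarrow> \<not> up q)"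
    | "2 \<le> q" "q < n" "up (q - 1)" "\<not> up q"
    | "2 \<le> q" "q < n" "\<not> up (q - 1)" "up q"
    by blast
  then show thesis
  proof cases
    case 1
    have "zigzag_ideal up n {1..q - 1}" "zigzag_ideal up n {1..q}"
      by (rule zigzag_ideal_prefix; use 1 assms in auto)+
    moreover have "insert q {1..q - 1} = {1..q}"
      using assms by auto
    ultimately show ?thesis
      by (intro that) auto
  next
    case 2
    have "zigzag_ideal up n {Suc q..n}" "zigzag_ideal up n {Suc (q - 1)..n}"
      by (rule zigzag_ideal_suffix; use 2 assms in auto)+
    moreover have "insert q {Suc q..n} = {Suc (q - 1)..n}"
      using assms by auto
    ultimately show ?thesis
      by (intro that) auto
  next
    case 3
    have "zigzag_ideal up n ({1..q - 1} \<union> {Suc q..n})"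
      using 3 by (intro zigzag_ideal_Un zigzag_ideal_prefix zigzag_ideal_suffix) auto
    moreover have "insert q ({1..q - 1} \<union> {Suc q..n}) = {1..n}"
      using assms by auto
    moreover have "zigzag_ideal up n {1..n}"
      by (rule zigzag_ideal_prefix) auto
    ultimately show ?thesis
      by (intro that) auto
  next
    case 4
    have "zigzag_ideal up n {q}"
      unfolding zigzag_ideal_def zigzag_cover_iff using 4 by auto
    then show ?thesis
      using zigzag_ideal_empty by (intro that) auto
  qed
qed

lemma zigzag_toggle_eq:
  "zigzag_toggle up n q I =
     (if q \<notin> I \<and> (2 \<le> q \<and> q \<le> n \<and> up (q - 1) \<longrightarrow> q - 1 \<in> I)
           \<and> (1 \<le> q \<and> q < n \<and> \<not> up q \<longrightarrow> Suc q \<in> I) then 1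
      else if q \<in> I \<and> (1 \<le> q \<and> q < n \<and> up q \<longrightarrow> Suc q \<notin> I)
           \<and> (2 \<le> q \<and> q \<le> n \<and> \<not> up (q - 1) \<longrightarrow> q - 1 \<notin> I) then -1
      else 0)"
proof -
  have lower: "(\<forall>p. (p, q) \<in> zigzag_cover up n \<longrightarrow> p \<in> I) \<longleftrightarrow>
      (2 \<le> q \<and> q \<le> n \<and> up (q - 1) \<longrightarrow> q - 1 \<in> I) \<and> (1 \<le> q \<and> q < n \<and> \<not> up q \<longrightarrow> Suc q \<in> I)"
    unfolding zigzag_cover_iff by (cases q) auto
  have upper: "(\<forall>p. (q, p) \<in> zigzag_cover up n \<longrightarrow> p \<notin> I) \<longleftrightarrow>
      (1 \<le> q \<and> q < n \<and> up q \<longrightarrow> Suc q \<notin> I) \<and> (2 \<le> q \<and> q \<le> n \<and> \<not> up (q - 1) \<longrightarrow> q - 1 \<notin> I)"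
    unfolding zigzag_cover_iff by (cases q) auto
  show ?thesis
    unfolding zigzag_toggle_def lower upper ..
qed

lemma zigzag_toggle_cong:
  assumes "1 \<le> q" and "I \<inter> {q - 1, q, Suc q} = J \<inter> {q - 1, q, Suc q}"
  shows "zigzag_toggle up n q I = zigzag_toggle up n q J"
proof -
  have "q \<in> I \<longleftrightarrow> q \<in> J" "q - 1 \<in> I \<longleftrightarrow> q - 1 \<in> J" "Suc q \<in> I \<longleftrightarrow> Suc q \<in> J"
    using assms(2) by blast+
  then show ?thesis
    unfolding zigzag_toggle_eq by simp
qed

lemma zigzag_toggle_insert_self:
  assumes "zigzag_ideal up n X" "zigzag_ideal up n (insert q X)" "q \<notin> X"
  shows "zigzag_toggle up n q X = 1" "zigzag_toggle up n q (insert q X) = -1"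
proof -
  have "\<forall>p. (p, q) \<in> zigzag_cover up n \<longrightarrow> p \<in> X"
    using assms(2) zigzag_cover_irrefl unfolding zigzag_ideal_def by blast
  moreover have "\<forall>p. (q, p) \<in> zigzag_cover up n \<longrightarrow> p \<notin> insert q X"
    using assms(1,3) zigzag_cover_irrefl unfolding zigzag_ideal_def by blast
  ultimately show "zigzag_toggle up n q X = 1" "zigzag_toggle up n q (insert q X) = -1"
    using assms(3) unfolding zigzag_toggle_def by simp_all
qed

(* A non-turn neighbour p of q has q as its only cover on q's side, so adding q to the ideal
   moves p from max(X) to neither, or from neither to min of the complement. *)
lemma zigzag_toggle_insert_neighbour:
  assumes X: "zigzag_ideal up n X" and qX: "zigzag_ideal up n (insert q X)" and "q \<notin> X"
    and p: "p \<in> {1..n}" "p = q - 1 \<or> p = Suc q" "\<not> zigzag_turn up n p"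
  shows "zigzag_toggle up n p (insert q X) = zigzag_toggle up n p X + 1"
proof -
  have "q \<in> {1..n}"
    using qX unfolding zigzag_ideal_def by auto
  then consider "(p, q) \<in> zigzag_cover up n" | "(q, p) \<in> zigzag_cover up n"
    using zigzag_cover_neighbour[OF p(1) _ p(2)] by blast
  then show ?thesis
  proof cases
    case 1
    have "p \<in> X"
      using 1 qX zigzag_cover_irrefl unfolding zigzag_ideal_def by blast
    moreover have "\<forall>r. (p, r) \<in> zigzag_cover up n \<longrightarrow> r \<notin> X"
      using zigzag_upper_cover_unique[OF p(3) 1] \<open>q \<notin> X\<close> by blast
    moreover have "\<not> (\<forall>r. (p, r) \<in> zigzag_cover up n \<longrightarrow> r \<notin> insert q X)"
      using 1 by blast
    ultimately have "zigzag_toggle up n p X = -1" "zigzag_toggle up n p (insert q X) = 0"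
      unfolding zigzag_toggle_def by simp_all
    then show ?thesis
      by simp
  next
    case 2
    have "p \<notin> insert q X"
      using 2 X \<open>q \<notin> X\<close> zigzag_cover_irrefl unfolding zigzag_ideal_def by blast
    moreover have "\<forall>r. (r, p) \<in> zigzag_cover up n \<longrightarrow> r \<in> insert q X"
      using zigzag_lower_cover_unique[OF p(3) 2] by blast
    moreover have "\<not> (\<forall>r. (r, p) \<in> zigzag_cover up n \<longrightarrow> r \<in> X)"
      using 2 \<open>q \<notin> X\<close> by blast
    ultimately have "zigzag_toggle up n p X = 0" "zigzag_toggle up n p (insert q X) = 1"
      unfolding zigzag_toggle_def by simp_all
    then show ?thesis
      by simp
  qed
qed

lemma zigzag_toggle_insert_sum:
  fixes up :: "nat \<Rightarrow> bool" and n :: nat and c :: "nat \<Rightarrow> real"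
  defines "e \<equiv> \<lambda>r. if r \<in> {1..n} then c r else 0"
  assumes turn_coeff: "\<And>r. zigzag_turn up n r \<Longrightarrow> c r = 0"
    and X: "zigzag_ideal up n X" and pX: "zigzag_ideal up n (insert p X)" and "p \<notin> X"
  shows "(\<Sum>r\<in>{1..n}. c r * (zigzag_toggle up n r (insert p X) - zigzag_toggle up n r X)) =
    e (p - 1) + e (Suc p) - 2 * e p"
proof -
  have p: "p \<in> {1..n}"
    using pX unfolding zigzag_ideal_def by auto
  have e_delta: "(\<Sum>r\<in>{1..n}. if r = a then e r else 0) = e a" for a
    by (simp add: e_def)
  have change: "c r * (zigzag_toggle up n r (insert p X) - zigzag_toggle up n r X) =
      (if r = p - 1 then e r else 0) + (if r = Suc p then e r else 0) - 2 * (if r = p then e r else 0)"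
    if r: "r \<in> {1..n}" for r
  proof -
    consider "r = p" | "r = p - 1 \<or> r = Suc p" | "r \<notin> {p - 1, p, Suc p}"
      by auto
    then show ?thesis
    proof cases
      case 1
      moreover have "p \<noteq> p - 1"
        using p by auto
      ultimately show ?thesis
        using zigzag_toggle_insert_self[OF X pX \<open>p \<notin> X\<close>] r e_def by simp
    next
      case 2
      have "r \<noteq> p" "p - 1 \<noteq> Suc p"
        using 2 p by auto
      moreover have "c r * (zigzag_toggle up n r (insert p X) - zigzag_toggle up n r X) = e r"
        using zigzag_toggle_insert_neighbour[OF X pX \<open>p \<notin> X\<close> r 2] turn_coeff[of r] r e_def
        by (cases "zigzag_turn up n r") auto
      ultimately show ?thesis
        using 2 by auto
    next
      case 3
      then have "zigzag_toggle up n r (insert p X) = zigzag_toggle up n r X"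
        using r by (intro zigzag_toggle_cong) auto
      then show ?thesis
        using 3 by auto
    qed
  qed
  have "(\<Sum>r\<in>{1..n}. c r * (zigzag_toggle up n r (insert p X) - zigzag_toggle up n r X)) =
      (\<Sum>r\<in>{1..n}. (if r = p - 1 then e r else 0) + (if r = Suc p then e r else 0)
        - 2 * (if r = p then e r else 0))"
    by (rule sum.cong) (simp_all add: change)
  also have "\<dots> = e (p - 1) + e (Suc p) - 2 * e p"
    unfolding sum.distrib sum_subtractf sum_distrib_left[symmetric] e_delta ..
  finally show ?thesis .
qed

lemma zigzag_toggle_defect_eq_0:
  assumes "1 \<le> q" and "X \<inter> {q - 1, q, Suc q} \<subseteq> Y \<or> Y \<inter> {q - 1, q, Suc q} \<subseteq> X"
  shows "zigzag_toggle_defect up n q X Y = 0"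
  using assms(2)
proof
  assume "X \<inter> {q - 1, q, Suc q} \<subseteq> Y"
  then have "zigzag_toggle up n q (X \<union> Y) = zigzag_toggle up n q Y"
    and "zigzag_toggle up n q (X \<inter> Y) = zigzag_toggle up n q X"
    by (auto intro!: zigzag_toggle_cong[OF assms(1)])
  then show ?thesis
    unfolding zigzag_toggle_defect_def by simp
next
  assume "Y \<inter> {q - 1, q, Suc q} \<subseteq> X"
  then have "zigzag_toggle up n q (X \<union> Y) = zigzag_toggle up n q X"
    and "zigzag_toggle up n q (X \<inter> Y) = zigzag_toggle up n q Y"
    by (auto intro!: zigzag_toggle_cong[OF assms(1)])
  then show ?thesis
    unfolding zigzag_toggle_defect_def by simp
qed

lemma zigzag_peak_defect:
  assumes s: "2 \<le> s" "s < n" "up (s - 1)" "\<not> up s" and "q \<in> {1..n}"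
  shows "zigzag_toggle_defect up n q {1..s - 1} {Suc s..n} = (if q = s then 1 else 0)"
proof (cases "q = s")
  case True
  have "s - 1 \<in> {1..s - 1}" "s \<notin> {1..s - 1}" "Suc s \<notin> {1..s - 1}"
    and "s - 1 \<notin> {Suc s..n}" "s \<notin> {Suc s..n}" "Suc s \<in> {Suc s..n}"
    using s by auto
  then show ?thesis
    using True s unfolding zigzag_toggle_defect_def zigzag_toggle_eq by simp
next
  case False
  have "q < s \<Longrightarrow> {Suc s..n} \<inter> {q - 1, q, Suc q} = {}" "s < q \<Longrightarrow> {1..s - 1} \<inter> {q - 1, q, Suc q} = {}"
    by auto
  then show ?thesis
    using False assms(5) by (cases "q < s") (auto intro!: zigzag_toggle_defect_eq_0)
qed

lemma zigzag_valley_defect: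
  assumes s: "2 \<le> s" "s < n" "\<not> up (s - 1)" "up s" and "q \<in> {1..n}"
  shows "zigzag_toggle_defect up n q {1..s} {s..n} = (if q = s then -1 else 0)"
proof (cases "q = s")
  case True
  have "s - 1 \<in> {1..s}" "s \<in> {1..s}" "Suc s \<notin> {1..s}"
    and "s - 1 \<notin> {s..n}" "s \<in> {s..n}" "Suc s \<in> {s..n}"
    using s by auto
  then show ?thesis
    using True s unfolding zigzag_toggle_defect_def zigzag_toggle_eq by simp
next
  case False
  have "q < s \<Longrightarrow> {s..n} \<inter> {q - 1, q, Suc q} \<subseteq> {1..s}" "s < q \<Longrightarrow> {1..s} \<inter> {q - 1, q, Suc q} \<subseteq> {s..n}"
    using s by auto
  then show ?thesis
    using False assms(5) by (cases "q < s") (auto intro!: zigzag_toggle_defect_eq_0)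
qed

lemma zigzag_turn_defect:
  assumes "zigzag_turn up n s"
  obtains X Y \<delta> where "zigzag_ideal up n X" "zigzag_ideal up n Y" "\<delta> \<noteq> 0"
    "\<And>q. q \<in> {1..n} \<Longrightarrow> zigzag_toggle_defect up n q X Y = (if q = s then \<delta> else 0)"
proof -
  from assms have s: "2 \<le> s" "s < n" "up (s - 1) \<noteq> up s"
    unfolding zigzag_turn_def by auto
  show thesis
  proof (cases "up (s - 1)")
    case True
    have "zigzag_ideal up n {1..s - 1}"
      using s True by (intro zigzag_ideal_prefix) auto
    moreover have "zigzag_ideal up n {Suc s..n}"
      using s True by (intro zigzag_ideal_suffix) auto
    ultimately show thesis
      using zigzag_peak_defect[of s n up] s True by (intro that[of "{1..s - 1}" "{Suc s..n}" 1]) auto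
  next
    case False
    have "zigzag_ideal up n {1..s}"
      using s False by (intro zigzag_ideal_prefix) auto
    moreover have "zigzag_ideal up n {Suc (s - 1)..n}"
      using s False by (intro zigzag_ideal_suffix) auto
    moreover have "{Suc (s - 1)..n} = {s..n}"
      using s by simp
    ultimately show thesis
      using zigzag_valley_defect[of s n up] s False by (intro that[of "{1..s}" "{s..n}" "-1"]) auto
  qed
qed

lemma zigzag_toggle_combination_turn_coeff:
  fixes c :: "nat \<Rightarrow> real" and G :: "nat set \<Rightarrow> real"
  assumes G_eq: "\<And>I. zigzag_ideal up n I \<Longrightarrow> G I = (\<Sum>p\<in>{1..n}. c p * zigzag_toggle up n p I)"
    and modular: "\<And>X Y. zigzag_ideal up n X \<Longrightarrow> zigzag_ideal up n Y \<Longrightarrow>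
      G (X \<union> Y) + G (X \<inter> Y) = G X + G Y"
    and "zigzag_turn up n s"
  shows "c s = 0"
proof -
  obtain X Y \<delta> where X: "zigzag_ideal up n X" and Y: "zigzag_ideal up n Y" and "\<delta> \<noteq> 0"
    and defect: "\<And>q. q \<in> {1..n} \<Longrightarrow> zigzag_toggle_defect up n q X Y = (if q = s then \<delta> else 0)"
    using zigzag_turn_defect[OF assms(3)] by blast
  have "0 = (\<Sum>p\<in>{1..n}. c p * zigzag_toggle_defect up n p X Y)"
    using modular[OF X Y]
    unfolding G_eq[OF X] G_eq[OF Y] G_eq[OF zigzag_ideal_Un[OF X Y]] G_eq[OF zigzag_ideal_Int[OF X Y]]
      zigzag_toggle_defect_def
    by (simp add: algebra_simps sum.distrib sum_subtractf)
  also have "\<dots> = (\<Sum>p\<in>{1..n}. if p = s then c s * \<delta> else 0)"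
    by (rule sum.cong) (simp_all add: defect)
  also have "\<dots> = c s * \<delta>"
    using zigzag_turn_in_range[OF assms(3)] by simp
  finally show ?thesis
    using \<open>\<delta> \<noteq> 0\<close> by simp
qed

lemma zigzag_toggle_combination_eq_0:
  fixes c :: "nat \<Rightarrow> real" and G :: "nat set \<Rightarrow> real"
  assumes G_eq: "\<And>I. zigzag_ideal up n I \<Longrightarrow> G I = (\<Sum>p\<in>{1..n}. c p * zigzag_toggle up n p I)"
    and modular: "\<And>X Y. zigzag_ideal up n X \<Longrightarrow> zigzag_ideal up n Y \<Longrightarrow>
      G (X \<union> Y) + G (X \<inter> Y) = G X + G Y"
    and toggle_invariant: "\<And>X p. zigzag_ideal up n X \<Longrightarrow> zigzag_ideal up n (insert p X) \<Longrightarrow>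
      \<not> zigzag_turn up n p \<Longrightarrow> G (insert p X) = G X"
    and "q \<in> {1..n}"
  shows "c q = 0"
proof -
  have turn_coeff: "c s = 0" if "zigzag_turn up n s" for s
    using zigzag_toggle_combination_turn_coeff[OF G_eq modular that] by blast
  define e where "e r = (if r \<in> {1..n} then c r else 0)" for r
  have harmonic: "e p = 0 \<or> 2 * e p = e (p - 1) + e (Suc p)" if p: "p \<in> {1..n}" for p
  proof (cases "zigzag_turn up n p")
    case True
    then show ?thesis
      using turn_coeff e_def by simp
  next
    case False
    obtain X where X: "zigzag_ideal up n X" and pX: "zigzag_ideal up n (insert p X)" and "p \<notin> X"
      using zigzag_ideal_insert_exists[OF p] .
    have "0 = (\<Sum>r\<in>{1..n}. c r * (zigzag_toggle up n r (insert p X) - zigzag_toggle up n r X))"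
      using toggle_invariant[OF X pX False] unfolding G_eq[OF X] G_eq[OF pX]
      by (simp add: algebra_simps sum_subtractf)
    also have "\<dots> = e (p - 1) + e (Suc p) - 2 * e p"
      unfolding e_def[abs_def] using zigzag_toggle_insert_sum[OF turn_coeff X pX \<open>p \<notin> X\<close>] .
    finally show ?thesis
      by simp
  qed
  have "e q = 0"
  proof (rule discrete_harmonic_eq_0[where n = n])
    show "e 0 = 0" "e (Suc n) = 0"
      by (simp_all add: e_def)
    show "q \<le> Suc n"
      using \<open>q \<in> {1..n}\<close> by simp
  qed (rule harmonic)
  then show ?thesis
    using \<open>q \<in> {1..n}\<close> e_def by simp
qed

lemma chi_hat_modular: "chi_hat q (X \<union> Y) + chi_hat q (X \<inter> Y) = chi_hat q X + chi_hat q Y"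
  unfolding chi_hat_def by simp

lemma zigzag_chi_hat_independent:
  fixes d :: "'a \<Rightarrow> real" and s :: "'a \<Rightarrow> nat"
  assumes "finite K" and inj: "inj_on s K" and "s ` K \<subseteq> {1..n}"
    and vanish: "\<And>I. zigzag_ideal up n I \<Longrightarrow> (\<Sum>k\<in>K. d k * chi_hat (s k) I) = 0"
    and "i \<in> K"
  shows "d i = 0"
proof -
  obtain X where X: "zigzag_ideal up n X" and iX: "zigzag_ideal up n (insert (s i) X)" and "s i \<notin> X"
    using zigzag_ideal_insert_exists[of "s i" n] assms(3,5) by blast
  have "0 = (\<Sum>k\<in>K. d k * chi_hat (s k) (insert (s i) X)) - (\<Sum>k\<in>K. d k * chi_hat (s k) X)"
    using vanish[OF X] vanish[OF iX] by simp
  also have "\<dots> = (\<Sum>k\<in>K. if k = i then d k else 0)"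
    unfolding sum_subtractf[symmetric]
  proof (rule sum.cong)
    fix k assume "k \<in> K"
    then have "s k = s i \<longleftrightarrow> k = i"
      using inj_onD[OF inj _ \<open>k \<in> K\<close> \<open>i \<in> K\<close>] by blast
    then show "d k * chi_hat (s k) (insert (s i) X) - d k * chi_hat (s k) X = (if k = i then d k else 0)"
      using \<open>s i \<notin> X\<close> unfolding chi_hat_def by auto
  qed simp
  also have "\<dots> = d i"
    using assms(1,5) by simp
  finally show ?thesis
    by simp
qed

lemma zigzag_chi_hat_span_toggle_const_eq_0:
  fixes d :: "'a \<Rightarrow> real" and s :: "'a \<Rightarrow> nat" and cq :: "nat \<Rightarrow> real"
  assumes turns: "\<And>k. k \<in> K \<Longrightarrow> zigzag_turn up n (s k)"
    and eq: "\<And>I. zigzag_ideal up n I \<Longrightarrow>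
      (\<Sum>k\<in>K. d k * chi_hat (s k) I) = c + (\<Sum>q\<in>{1..n}. cq q * zigzag_toggle up n q I)"
    and "zigzag_ideal up n I"
  shows "(\<Sum>k\<in>K. d k * chi_hat (s k) I) = 0"
proof -
  define F where "F I = (\<Sum>k\<in>K. d k * chi_hat (s k) I)" for I
  have modular: "F (X \<union> Y) + F (X \<inter> Y) = F X + F Y" for X Y
  proof -
    have "F (X \<union> Y) + F (X \<inter> Y) = (\<Sum>k\<in>K. d k * (chi_hat (s k) (X \<union> Y) + chi_hat (s k) (X \<inter> Y)))"
      unfolding F_def by (simp add: sum.distrib distrib_left)
    also have "\<dots> = F X + F Y"
      unfolding F_def chi_hat_modular by (simp add: sum.distrib distrib_left)
    finally show ?thesis .
  qed
  have "cq q = 0" if "q \<in> {1..n}" for q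
  proof (rule zigzag_toggle_combination_eq_0[where G = "\<lambda>I. F I - c", OF _ _ _ that])
    show "F I - c = (\<Sum>q\<in>{1..n}. cq q * zigzag_toggle up n q I)" if "zigzag_ideal up n I" for I
      using eq[OF that] unfolding F_def by simp
    show "F (X \<union> Y) - c + (F (X \<inter> Y) - c) = F X - c + (F Y - c)" for X Y
      using modular[of X Y] by simp
    show "F (insert p X) - c = F X - c" if "\<not> zigzag_turn up n p" for X p
    proof -
      have "s k \<noteq> p" if "k \<in> K" for k
        using turns[OF that] \<open>\<not> zigzag_turn up n p\<close> by auto
      then show ?thesis
        unfolding F_def chi_hat_def by (simp cong: sum.cong)
    qed
  qed
  then have "F I = c" if "zigzag_ideal up n I" for I
    using eq[OF that] unfolding F_def by simp
  moreover have "F {} = 0"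
    unfolding F_def chi_hat_def by simp
  ultimately show ?thesis
    using \<open>zigzag_ideal up n I\<close> zigzag_ideal_empty unfolding F_def by metis
qed

section \<open>Fences as zigzag paths\<close>

lemma fence_a_Suc: "i < length \<alpha> \<Longrightarrow> fence_a \<alpha> (Suc i) = fence_a \<alpha> i + \<alpha> ! i"
  unfolding fence_a_def by (simp add: take_Suc_conv_app_nth)

lemma fence_a_mono: "i \<le> j \<Longrightarrow> fence_a \<alpha> i \<le> fence_a \<alpha> j"
proof (rule lift_Suc_mono_le[of "fence_a \<alpha>"])
  show "fence_a \<alpha> k \<le> fence_a \<alpha> (Suc k)" for k
    unfolding fence_a_def by (cases "k < length \<alpha>") (simp_all add: take_Suc_conv_app_nth)
qed

lemma fence_a_strict_mono_on:
  assumes "\<forall>x\<in>set \<alpha>. x > 0"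
  shows "strict_mono_on {..length \<alpha>} (fence_a \<alpha>)"
proof (rule monotone_onI)
  fix i j assume "i \<in> {..length \<alpha>}" "j \<in> {..length \<alpha>}" "i < j"
  then obtain k where k: "j = Suc k" "k < length \<alpha>" "i \<le> k"
    by (cases j) auto
  then have "0 < \<alpha> ! k"
    using assms nth_mem[OF k(2)] by blast
  then show "fence_a \<alpha> i < fence_a \<alpha> j"
    using fence_a_mono[OF k(3), of \<alpha>] fence_a_Suc[OF k(2)] k(1) by simp
qed

lemma fence_segment_exists:
  assumes "j < fence_a \<alpha> (length \<alpha>)"
  obtains i where "1 \<le> i" "i \<le> length \<alpha>" "fence_a \<alpha> (i - 1) \<le> j" "j < fence_a \<alpha> i"
proof -
  define i where "i = (LEAST i. j < fence_a \<alpha> i)"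
  have "j < fence_a \<alpha> i"
    unfolding i_def by (rule LeastI[of "\<lambda>i. j < fence_a \<alpha> i", OF assms])
  moreover have "i \<le> length \<alpha>"
    unfolding i_def by (rule Least_le[of "\<lambda>i. j < fence_a \<alpha> i", OF assms])
  moreover have "i \<noteq> 0"
    using \<open>j < fence_a \<alpha> i\<close> by (intro notI) (simp add: fence_a_def)
  moreover have "\<not> j < fence_a \<alpha> (i - 1)"
    using not_less_Least[of "i - 1" "\<lambda>i. j < fence_a \<alpha> i"] \<open>i \<noteq> 0\<close> unfolding i_def by simp
  ultimately show thesis
    by (intro that) auto
qed

lemma fence_segment_unique:
  assumes "fence_a \<alpha> (i - 1) \<le> j" "j < fence_a \<alpha> i" "fence_a \<alpha> (i' - 1) \<le> j" "j < fence_a \<alpha> i'"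
    and "1 \<le> i" "1 \<le> i'"
  shows "i = i'"
proof (rule ccontr)
  assume "i \<noteq> i'"
  then have "i \<le> i' - 1 \<or> i' \<le> i - 1"
    using assms(5,6) by linarith
  then show False
    using fence_a_mono[of i "i' - 1" \<alpha>] fence_a_mono[of i' "i - 1" \<alpha>] assms(1-4) by auto
qed

definition fence_up :: "nat list \<Rightarrow> nat \<Rightarrow> bool" where
  "fence_up \<alpha> j \<longleftrightarrow> (j, Suc j) \<in> fence_cover \<alpha>"

lemma fence_cover_up_iff:
  assumes j: "1 \<le> j" "j < fence_n \<alpha>"
    and i: "1 \<le> i" "i \<le> length \<alpha>" "fence_a \<alpha> (i - 1) \<le> j" "j < fence_a \<alpha> i"
  shows "(j, Suc j) \<in> fence_cover \<alpha> \<longleftrightarrow> odd i"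
proof
  assume "(j, Suc j) \<in> fence_cover \<alpha>"
  then obtain j' i' where i': "1 \<le> i'" "fence_a \<alpha> (i' - 1) \<le> j'" "j' < fence_a \<alpha> i'"
    and dir: "(odd i' \<and> j = j' \<and> Suc j = j' + 1) \<or> (even i' \<and> j = j' + 1 \<and> Suc j = j')"
    unfolding fence_cover_def by blast
  from dir have "j' = j" "odd i'"
    by auto
  with i' show "odd i"
    using fence_segment_unique[of \<alpha> i' j i] i by simp
next
  assume "odd i"
  then show "(j, Suc j) \<in> fence_cover \<alpha>"
    unfolding fence_cover_def using j i
    by (intro CollectI case_prodI exI[of _ j] exI[of _ i]) auto
qed

lemma fence_cover_down_iff:
  assumes j: "1 \<le> j" "j < fence_n \<alpha>"
    and i: "1 \<le> i" "i \<le> length \<alpha>" "fence_a \<alpha> (i - 1) \<le> j" "j < fence_a \<alpha> i"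
  shows "(Suc j, j) \<in> fence_cover \<alpha> \<longleftrightarrow> even i"
proof
  assume "(Suc j, j) \<in> fence_cover \<alpha>"
  then obtain j' i' where i': "1 \<le> i'" "fence_a \<alpha> (i' - 1) \<le> j'" "j' < fence_a \<alpha> i'"
    and dir: "(odd i' \<and> Suc j = j' \<and> j = j' + 1) \<or> (even i' \<and> Suc j = j' + 1 \<and> j = j')"
    unfolding fence_cover_def by blast
  from dir have "j' = j" "even i'"
    by auto
  with i' show "even i"
    using fence_segment_unique[of \<alpha> i' j i] i by simp
next
  assume "even i"
  then show "(Suc j, j) \<in> fence_cover \<alpha>"
    unfolding fence_cover_def using j i
    by (intro CollectI case_prodI exI[of _ j] exI[of _ i]) auto
qed

lemma fence_cover_eq: "fence_cover \<alpha> = zigzag_cover (fence_up \<alpha>) (fence_n \<alpha>)"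
proof (rule subset_antisym; rule subrelI)
  fix p q assume "(p, q) \<in> fence_cover \<alpha>"
  then obtain j i where j: "1 \<le> j" "j \<le> fence_n \<alpha> - 1"
    and i: "1 \<le> i" "i \<le> length \<alpha>" "fence_a \<alpha> (i - 1) \<le> j" "j < fence_a \<alpha> i"
    and dir: "(odd i \<and> p = j \<and> q = j + 1) \<or> (even i \<and> p = j + 1 \<and> q = j)"
    unfolding fence_cover_def by blast
  have "j < fence_n \<alpha>"
    using j by linarith
  then have "fence_up \<alpha> j \<longleftrightarrow> odd i"
    unfolding fence_up_def using fence_cover_up_iff[OF j(1) _ i] by simp
  then show "(p, q) \<in> zigzag_cover (fence_up \<alpha>) (fence_n \<alpha>)"
    using dir j(1) \<open>j < fence_n \<alpha>\<close> unfolding zigzag_cover_iff by auto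
next
  fix p q assume "(p, q) \<in> zigzag_cover (fence_up \<alpha>) (fence_n \<alpha>)"
  then obtain j where j: "1 \<le> j" "j < fence_n \<alpha>"
    and dir: "(fence_up \<alpha> j \<and> p = j \<and> q = Suc j) \<or> (\<not> fence_up \<alpha> j \<and> p = Suc j \<and> q = j)"
    unfolding zigzag_cover_def by blast
  show "(p, q) \<in> fence_cover \<alpha>"
  proof (cases "fence_up \<alpha> j")
    case True
    then show ?thesis
      using dir unfolding fence_up_def by simp
  next
    case False
    have "j < fence_a \<alpha> (length \<alpha>)"
      using j(2) unfolding fence_n_def by simp
    then obtain i where i: "1 \<le> i" "i \<le> length \<alpha>" "fence_a \<alpha> (i - 1) \<le> j" "j < fence_a \<alpha> i"
      by (rule fence_segment_exists)
    have "(Suc j, j) \<in> fence_cover \<alpha>"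
      using fence_cover_up_iff[OF j i] fence_cover_down_iff[OF j i] False unfolding fence_up_def by simp
    then show ?thesis
      using dir False by simp
  qed
qed

lemma fence_le_iff:
  "fence_le \<alpha> p q \<longleftrightarrow>
     p \<in> {1..fence_n \<alpha>} \<and> q \<in> {1..fence_n \<alpha>} \<and> (p, q) \<in> (zigzag_cover (fence_up \<alpha>) (fence_n \<alpha>))\<^sup>*"
  unfolding fence_le_def fence_elems_def fence_cover_eq ..

lemma fence_ideals_iff: "I \<in> fence_ideals \<alpha> \<longleftrightarrow> zigzag_ideal (fence_up \<alpha>) (fence_n \<alpha>) I"
proof
  assume I: "I \<in> fence_ideals \<alpha>"
  have "fence_le \<alpha> p q" if "(p, q) \<in> zigzag_cover (fence_up \<alpha>) (fence_n \<alpha>)" for p q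
    unfolding fence_le_iff using zigzag_cover_in_range[OF that] that by auto
  then show "zigzag_ideal (fence_up \<alpha>) (fence_n \<alpha>) I"
    using I unfolding fence_ideals_def fence_elems_def zigzag_ideal_def by blast
next
  assume I: "zigzag_ideal (fence_up \<alpha>) (fence_n \<alpha>) I"
  then show "I \<in> fence_ideals \<alpha>"
    unfolding fence_ideals_def fence_elems_def fence_le_iff
    using zigzag_ideal_rtrancl_closed[OF I] unfolding zigzag_ideal_def by blast
qed

lemma fence_less_iff:
  "fence_less \<alpha> x y \<longleftrightarrow> x \<in> fence_elems \<alpha> \<and> y \<in> fence_elems \<alpha> \<and>
     (x, y) \<in> (zigzag_cover (fence_up \<alpha>) (fence_n \<alpha>))\<^sup>* \<and> x \<noteq> y"
  unfolding fence_less_def fence_le_iff fence_elems_def by blast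

lemma fence_cover_less: "(x, y) \<in> zigzag_cover (fence_up \<alpha>) (fence_n \<alpha>) \<Longrightarrow> fence_less \<alpha> x y"
  unfolding fence_less_iff fence_elems_def using zigzag_cover_in_range zigzag_cover_irrefl by blast

lemma fence_min_compl_iff:
  assumes "I \<in> fence_ideals \<alpha>"
  shows "(\<forall>p\<in>fence_elems \<alpha> - I. \<not> fence_less \<alpha> p q) \<longleftrightarrow>
    (\<forall>p. (p, q) \<in> zigzag_cover (fence_up \<alpha>) (fence_n \<alpha>) \<longrightarrow> p \<in> I)"
proof
  assume "\<forall>p\<in>fence_elems \<alpha> - I. \<not> fence_less \<alpha> p q"
  then show "\<forall>p. (p, q) \<in> zigzag_cover (fence_up \<alpha>) (fence_n \<alpha>) \<longrightarrow> p \<in> I"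
    using fence_cover_less fence_less_iff by blast
next
  assume below: "\<forall>p. (p, q) \<in> zigzag_cover (fence_up \<alpha>) (fence_n \<alpha>) \<longrightarrow> p \<in> I"
  show "\<forall>p\<in>fence_elems \<alpha> - I. \<not> fence_less \<alpha> p q"
  proof (intro ballI notI)
    fix p assume p: "p \<in> fence_elems \<alpha> - I" and "fence_less \<alpha> p q"
    then obtain y where "(p, y) \<in> (zigzag_cover (fence_up \<alpha>) (fence_n \<alpha>))\<^sup>*"
      and "(y, q) \<in> zigzag_cover (fence_up \<alpha>) (fence_n \<alpha>)"
      unfolding fence_less_iff by (blast elim: rtranclE)
    then show False
      using zigzag_ideal_rtrancl_closed[OF assms[unfolded fence_ideals_iff]] below p by blast
  qed
qed

lemma fence_max_iff:
  assumes "I \<in> fence_ideals \<alpha>"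
  shows "(\<forall>p\<in>I. \<not> fence_less \<alpha> q p) \<longleftrightarrow>
    (\<forall>p. (q, p) \<in> zigzag_cover (fence_up \<alpha>) (fence_n \<alpha>) \<longrightarrow> p \<notin> I)"
proof
  assume "\<forall>p\<in>I. \<not> fence_less \<alpha> q p"
  then show "\<forall>p. (q, p) \<in> zigzag_cover (fence_up \<alpha>) (fence_n \<alpha>) \<longrightarrow> p \<notin> I"
    using fence_cover_less by blast
next
  assume above: "\<forall>p. (q, p) \<in> zigzag_cover (fence_up \<alpha>) (fence_n \<alpha>) \<longrightarrow> p \<notin> I"
  show "\<forall>p\<in>I. \<not> fence_less \<alpha> q p"
  proof (intro ballI notI)
    fix p assume "p \<in> I" and "fence_less \<alpha> q p"
    then obtain y where "(q, y) \<in> zigzag_cover (fence_up \<alpha>) (fence_n \<alpha>)"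
      and "(y, p) \<in> (zigzag_cover (fence_up \<alpha>) (fence_n \<alpha>))\<^sup>*"
      unfolding fence_less_iff by (blast elim: converse_rtranclE)
    then show False
      using zigzag_ideal_rtrancl_closed[OF assms[unfolded fence_ideals_iff]] above \<open>p \<in> I\<close> by blast
  qed
qed

lemma toggle_T_eq_zigzag_toggle:
  assumes "I \<in> fence_ideals \<alpha>" and "q \<in> fence_elems \<alpha>"
  shows "toggle_T \<alpha> q I = zigzag_toggle (fence_up \<alpha>) (fence_n \<alpha>) q I"
  unfolding toggle_T_def zigzag_toggle_def fence_min_compl_iff[OF assms(1)] fence_max_iff[OF assms(1)]
  using assms(2) by simp

lemma fence_shared_turn:
  assumes pos: "\<forall>x\<in>set \<alpha>. x > 0" and "hd \<alpha> \<ge> 2" "last \<alpha> \<ge> 2"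
    and i: "i \<in> {1..length \<alpha> - 1}"
  shows "zigzag_turn (fence_up \<alpha>) (fence_n \<alpha>) (fence_shared \<alpha> i)"
proof -
  let ?a = "fence_a \<alpha>" and ?t = "length \<alpha>"
  have "\<alpha> \<noteq> []"
    using i by auto
  have "?a 1 = hd \<alpha>"
    using fence_a_Suc[of 0 \<alpha>] \<open>\<alpha> \<noteq> []\<close> by (simp add: hd_conv_nth fence_a_def)
  moreover have "?a ?t = ?a (?t - 1) + last \<alpha>"
    using fence_a_Suc[of "?t - 1" \<alpha>] \<open>\<alpha> \<noteq> []\<close> by (simp add: last_conv_nth)
  moreover have "?a 1 \<le> ?a i" "?a i \<le> ?a (?t - 1)"
    using i by (simp_all add: fence_a_mono)
  ultimately have s: "2 \<le> ?a i" "?a i < fence_n \<alpha>"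
    using assms(2,3) unfolding fence_n_def by simp_all
  have "?a (i - 1) < ?a i" "?a i < ?a (Suc i)"
    using fence_a_strict_mono_on[OF pos] i by (auto simp: monotone_on_def)
  have "(?a i - 1, Suc (?a i - 1)) \<in> fence_cover \<alpha> \<longleftrightarrow> odd i"
    by (rule fence_cover_up_iff) (use s i \<open>?a (i - 1) < ?a i\<close> in auto)
  moreover have "(?a i, Suc (?a i)) \<in> fence_cover \<alpha> \<longleftrightarrow> odd (Suc i)"
    by (rule fence_cover_up_iff) (use s i \<open>?a i < ?a (Suc i)\<close> in auto)
  ultimately have "fence_up \<alpha> (?a i - 1) \<longleftrightarrow> odd i" "fence_up \<alpha> (?a i) \<longleftrightarrow> even i"
    unfolding fence_up_def using s by simp_all
  then show ?thesis
    unfolding zigzag_turn_def fence_shared_def using s by simp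
qed

lemma fence_shared_inj_on:
  assumes "\<forall>x\<in>set \<alpha>. x > 0"
  shows "inj_on (fence_shared \<alpha>) {1..length \<alpha> - 1}"
proof -
  have "inj_on (fence_a \<alpha>) {..length \<alpha>}"
    by (rule strict_mono_on_imp_inj_on[OF fence_a_strict_mono_on[OF assms]])
  then show ?thesis
    unfolding fence_shared_def[abs_def] by (rule inj_on_subset) auto
qed

lemma fence_shared_chi_hat_independent:
  fixes d :: "nat \<Rightarrow> real"
  assumes "\<forall>x\<in>set \<alpha>. x > 0" and "hd \<alpha> \<ge> 2" and "last \<alpha> \<ge> 2"
    and vanish: "\<forall>I\<in>fence_ideals \<alpha>. (\<Sum>i\<in>{1..length \<alpha> - 1}. d i * chi_hat (fence_shared \<alpha> i) I) = 0"
    and "i \<in> {1..length \<alpha> - 1}"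
  shows "d i = 0"
proof (rule zigzag_chi_hat_independent[where up = "fence_up \<alpha>", OF _ fence_shared_inj_on[OF assms(1)]])
  show "fence_shared \<alpha> ` {1..length \<alpha> - 1} \<subseteq> {1..fence_n \<alpha>}"
    using fence_shared_turn[OF assms(1-3)] zigzag_turn_in_range by blast
  show "(\<Sum>i\<in>{1..length \<alpha> - 1}. d i * chi_hat (fence_shared \<alpha> i) I) = 0"
    if "zigzag_ideal (fence_up \<alpha>) (fence_n \<alpha>) I" for I
    using vanish fence_ideals_iff[THEN iffD2, OF that] by blast
qed (use assms(5) in simp_all)

lemma fence_shared_span_toggleability_eq_0:
  fixes d :: "nat \<Rightarrow> real"
  assumes "\<forall>x\<in>set \<alpha>. x > 0" and "hd \<alpha> \<ge> 2" and "last \<alpha> \<ge> 2"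
    and "f \<in> toggleability_space \<alpha>"
    and f_span: "\<forall>I\<in>fence_ideals \<alpha>. f I = (\<Sum>i\<in>{1..length \<alpha> - 1}. d i * chi_hat (fence_shared \<alpha> i) I)"
    and I: "I \<in> fence_ideals \<alpha>"
  shows "f I = 0"
proof -
  let ?K = "{1..length \<alpha> - 1}" and ?up = "fence_up \<alpha>" and ?n = "fence_n \<alpha>"
  obtain c cq where f_const: "\<forall>I\<in>fence_ideals \<alpha>. f I = c + (\<Sum>q\<in>fence_elems \<alpha>. cq q * toggle_T \<alpha> q I)"
    using assms(4) unfolding toggleability_space_def toggle_const_def by blast
  have span_eq_const: "(\<Sum>i\<in>?K. d i * chi_hat (fence_shared \<alpha> i) J) =
      c + (\<Sum>q\<in>{1..?n}. cq q * zigzag_toggle ?up ?n q J)" if "zigzag_ideal ?up ?n J" for J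
  proof -
    have J: "J \<in> fence_ideals \<alpha>"
      using that unfolding fence_ideals_iff .
    then have "(\<Sum>i\<in>?K. d i * chi_hat (fence_shared \<alpha> i) J) = c + (\<Sum>q\<in>fence_elems \<alpha>. cq q * toggle_T \<alpha> q J)"
      using f_span f_const by simp
    also have "\<dots> = c + (\<Sum>q\<in>{1..?n}. cq q * zigzag_toggle ?up ?n q J)"
      using toggle_T_eq_zigzag_toggle[OF J] unfolding fence_elems_def by simp
    finally show ?thesis .
  qed
  show ?thesis
    using zigzag_chi_hat_span_toggle_const_eq_0[OF fence_shared_turn[OF assms(1-3)] span_eq_const
        fence_ideals_iff[THEN iffD1, OF I]] f_span I
    by simp
qed

theorem lemma4p3:
  fixes \<alpha> :: "nat list"
  assumes "length \<alpha> \<ge> 2"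
    and "\<forall>x\<in>set \<alpha>. x > 0"
    and "hd \<alpha> \<ge> 2" and "last \<alpha> \<ge> 2"
  shows "inj_on (fence_shared \<alpha>) {1..length \<alpha> - 1}
    \<and> (\<forall>d :: nat \<Rightarrow> real.
         (\<forall>I\<in>fence_ideals \<alpha>. (\<Sum>i\<in>{1..length \<alpha> - 1}. d i * chi_hat (fence_shared \<alpha> i) I) = 0)
         \<longrightarrow> (\<forall>i\<in>{1..length \<alpha> - 1}. d i = 0))
    \<and> (\<forall>f\<in>toggleability_space \<alpha>.
         (\<exists>d :: nat \<Rightarrow> real. \<forall>I\<in>fence_ideals \<alpha>.
             f I = (\<Sum>i\<in>{1..length \<alpha> - 1}. d i * chi_hat (fence_shared \<alpha> i) I))
         \<longrightarrow> (\<forall>I\<in>fence_ideals \<alpha>. f I = 0))"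
proof (intro conjI allI impI ballI)
  show "inj_on (fence_shared \<alpha>) {1..length \<alpha> - 1}"
    using assms(2) by (rule fence_shared_inj_on)
next
  fix d :: "nat \<Rightarrow> real" and i
  assume "\<forall>I\<in>fence_ideals \<alpha>. (\<Sum>i\<in>{1..length \<alpha> - 1}. d i * chi_hat (fence_shared \<alpha> i) I) = 0"
    and "i \<in> {1..length \<alpha> - 1}"
  then show "d i = 0"
    by (rule fence_shared_chi_hat_independent[OF assms(2-4)])
next
  fix f I
  assume "f \<in> toggleability_space \<alpha>" and "I \<in> fence_ideals \<alpha>"
    and "\<exists>d :: nat \<Rightarrow> real. \<forall>I\<in>fence_ideals \<alpha>.
      f I = (\<Sum>i\<in>{1..length \<alpha> - 1}. d i * chi_hat (fence_shared \<alpha> i) I)"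
  then show "f I = 0"
    using fence_shared_span_toggleability_eq_0[OF assms(2-4)] by blast
qed

end
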